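(* Let $\alpha\in[0,1]$. (a) If $G$ is any graph and $H_1,H_2$ are $A_\alpha$-cospectral graphs with $\Gamma_{A_\alpha(H_1)}(x)=\Gamma_{A_\alpha(H_2)}(x)$, then $G\vee H_1$ and $G\vee H_2$ are $A_\alpha$-cospectral. (b) If $G_1,G_2$ are $A_\alpha$-cospectral graphs with $\Gamma_{A_\alpha(G_1)}(x)=\Gamma_{A_\alpha(G_2)}(x)$ and $H_1,H_2$ are $A_\alpha$-cospectral graphs with $\Gamma_{A_\alpha(H_1)}(x)=\Gamma_{A_\alpha(H_2)}(x)$, then $G_1\vee H_1$ and $G_2\vee H_2$ are $A_\alpha$-cospectral.
   Context: All graphs are finite, simple and undirected. For a graph $G$, $A(G)$ is its adjacency matrix, $D(G)$ its diagonal degree matrix, and $A_\alpha(G)=\alpha D(G)+(1-\alpha)A(G)$. Two graphs are $A_\alpha$-cospectral if $A_\alpha$ of each has the same multiset of eigenvalues. For an $n\times n$ matrix $M$, its coronal is $\Gamma_M(x)=\mathbf{1}_n^T(xI_n-M)^{-1}\mathbf{1}_n$ (a rational function of $x$), with $\mathbf{1}_n$ the all-ones vector. $G\vee H$ denotes the join: the disjoint union of $G$ and $H$ with all edges between $V(G)$ and $V(H)$ added. *)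

theory Defs
  imports "Jordan_Normal_Form.Char_Poly" "Jordan_Normal_Form.Gauss_Jordan_Elimination"
begin

text \<open>A finite simple graph with vertex set {0..<n}, given by an edge predicate E
  which is symmetric and irreflexive on the vertex set.\<close>
type_synonym graph = "nat \<times> (nat \<Rightarrow> nat \<Rightarrow> bool)"

definition nverts :: "graph \<Rightarrow> nat" where "nverts G = fst G"
definition adj :: "graph \<Rightarrow> nat \<Rightarrow> nat \<Rightarrow> bool" where "adj G = snd G"

definition simple_graph :: "graph \<Rightarrow> bool" where
  "simple_graph G \<longleftrightarrow>
     (\<forall>i<nverts G. \<forall>j<nverts G. adj G i j = adj G j i) \<and>
     (\<forall>i<nverts G. \<not> adj G i i)"

definition adj_matrix :: "graph \<Rightarrow> real mat" where
  "adj_matrix G = mat (nverts G) (nverts G) (\<lambda>(i,j). if adj G i j then 1 else 0)"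

definition degree :: "graph \<Rightarrow> nat \<Rightarrow> nat" where
  "degree G i = card {j. j < nverts G \<and> adj G i j}"

definition deg_matrix :: "graph \<Rightarrow> real mat" where
  "deg_matrix G = mat (nverts G) (nverts G) (\<lambda>(i,j). if i = j then real (degree G i) else 0)"

definition A_alpha :: "real \<Rightarrow> graph \<Rightarrow> real mat" where
  "A_alpha \<alpha> G = \<alpha> \<cdot>\<^sub>m deg_matrix G + (1 - \<alpha>) \<cdot>\<^sub>m adj_matrix G"

definition eigenvalues :: "real mat \<Rightarrow> complex multiset" where
  "eigenvalues M = proots (char_poly (map_mat complex_of_real M))"

definition A_alpha_cospectral :: "real \<Rightarrow> graph \<Rightarrow> graph \<Rightarrow> bool" where
  "A_alpha_cospectral \<alpha> G H \<longleftrightarrow> eigenvalues (A_alpha \<alpha> G) = eigenvalues (A_alpha \<alpha> H)"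

text \<open>Coronal evaluated at a real point x: 1^T (xI - M)^{-1} 1 (value 0 where xI - M is singular,
  i.e. at poles).\<close>
definition coronal :: "real mat \<Rightarrow> real \<Rightarrow> real" where
  "coronal M x = (case mat_inverse (x \<cdot>\<^sub>m 1\<^sub>m (dim_row M) - M) of
      Some B \<Rightarrow> vec (dim_row M) (\<lambda>_. 1) \<bullet> (B *\<^sub>v vec (dim_row M) (\<lambda>_. 1))
    | None \<Rightarrow> 0)"

text \<open>Equality of coronals as rational functions: they agree at every real x that is a pole of
  neither (i.e. x is an eigenvalue of neither matrix).\<close>
definition same_coronal :: "real mat \<Rightarrow> real mat \<Rightarrow> bool" where
  "same_coronal M N \<longleftrightarrow>
     (\<forall>x. \<not> eigenvalue M x \<and> \<not> eigenvalue N x \<longrightarrow> coronal M x = coronal N x)"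

text \<open>Join: vertices of G are 0..<n, vertices of H are shifted to n..<n+m.\<close>
definition join :: "graph \<Rightarrow> graph \<Rightarrow> graph" where
  "join G H = (nverts G + nverts H,
     (\<lambda>i j. if i < nverts G \<and> j < nverts G then adj G i j
            else if nverts G \<le> i \<and> nverts G \<le> j then adj H (i - nverts G) (j - nverts G)
            else True))"

end

theory Submission
  imports Defs
begin

text \<open>Number the vertices of the join so that those of \<open>G\<close> (\<open>n\<close> of them) come first and
  those of \<open>H\<close> (\<open>m\<close> of them) last. Then \<open>xI - A\<^sub>\<alpha>(G \<or> H)\<close> has diagonal blocks
  \<open>(x - \<alpha>m)I - A\<^sub>\<alpha>(G)\<close> and \<open>(x - \<alpha>n)I - A\<^sub>\<alpha>(H)\<close> and off-diagonal blocks \<open>-(1 - \<alpha>)J\<close>.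
  A Schur complement followed by the matrix determinant lemma gives, for all but finitely many \<open>x\<close>,
  \<open>\<phi>(G \<or> H, x) = \<phi>(G, x - \<alpha>m) \<phi>(H, x - \<alpha>n) (1 - (1 - \<alpha>)\<^sup>2 \<Gamma>\<^sub>G(x - \<alpha>m) \<Gamma>\<^sub>H(x - \<alpha>n))\<close>,
  where \<open>\<phi>\<close> is the characteristic polynomial and \<open>\<Gamma>\<close> the coronal of \<open>A\<^sub>\<alpha>\<close>. The right-hand
  side only involves data that the hypotheses make equal, and polynomials agreeing at all
  but finitely many points coincide.\<close>

lemma det_four_block_mat_schur_upper_left:
  fixes P :: "'a::field mat"
  assumes P: "P \<in> carrier_mat n n" and Q: "Q \<in> carrier_mat n m" and R: "R \<in> carrier_mat m n"
    and S: "S \<in> carrier_mat m m" and Pv: "Pv \<in> carrier_mat n n" and inv: "Pv * P = 1\<^sub>m n"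
  shows "det (four_block_mat P Q R S) = det P * det (S - R * Pv * Q)"
proof -
  define K where "K = R * Pv"
  define T where "T = S - K * Q"
  have K: "K \<in> carrier_mat m n" and T: "T \<in> carrier_mat m m"
    unfolding K_def T_def using R Pv Q by auto
  have KP: "K * P = R"
    unfolding K_def using R Pv P inv by (simp add: assoc_mult_mat)
  have "four_block_mat (1\<^sub>m n) (0\<^sub>m n m) K (1\<^sub>m m) * four_block_mat P Q (0\<^sub>m m n) T
      = four_block_mat (1\<^sub>m n * P + 0\<^sub>m n m * 0\<^sub>m m n) (1\<^sub>m n * Q + 0\<^sub>m n m * T)
          (K * P + 1\<^sub>m m * 0\<^sub>m m n) (K * Q + 1\<^sub>m m * T)"
    using K T P Q by (intro mult_four_block_mat) auto
  also have "\<dots> = four_block_mat P Q R S"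
    using K T P Q R S unfolding KP T_def by (intro cong_four_block_mat eq_matI) auto
  finally have factor: "four_block_mat P Q R S
      = four_block_mat (1\<^sub>m n) (0\<^sub>m n m) K (1\<^sub>m m) * four_block_mat P Q (0\<^sub>m m n) T" ..
  have "det (four_block_mat P Q R S)
      = det (four_block_mat (1\<^sub>m n) (0\<^sub>m n m) K (1\<^sub>m m)) * det (four_block_mat P Q (0\<^sub>m m n) T)"
    unfolding factor using K T P Q by (intro det_mult[of _ "n+m"]) auto
  also have "\<dots> = det P * det T"
    by (simp add: det_four_block_mat_upper_right_zero[OF one_carrier_mat refl K one_carrier_mat]
        det_four_block_mat_lower_left_zero[OF P Q refl T])
  finally show ?thesis unfolding T_def K_def .
qed

lemma det_four_block_mat_schur_lower_right:
  fixes P :: "'a::field mat"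
  assumes P: "P \<in> carrier_mat n n" and Q: "Q \<in> carrier_mat n m" and R: "R \<in> carrier_mat m n"
    and S: "S \<in> carrier_mat m m" and Si: "Si \<in> carrier_mat m m" and inv: "S * Si = 1\<^sub>m m"
  shows "det (four_block_mat P Q R S) = det (P - Q * Si * R) * det S"
proof -
  define K where "K = Q * Si"
  define T where "T = P - K * R"
  have K: "K \<in> carrier_mat n m" and T: "T \<in> carrier_mat n n"
    unfolding K_def T_def using Q Si R by auto
  have KS: "K * S = Q"
    unfolding K_def using Q Si S mat_mult_left_right_inverse[OF S Si inv] by (simp add: assoc_mult_mat)
  have "four_block_mat (1\<^sub>m n) K (0\<^sub>m m n) (1\<^sub>m m) * four_block_mat T (0\<^sub>m n m) R S
      = four_block_mat (1\<^sub>m n * T + K * R) (1\<^sub>m n * 0\<^sub>m n m + K * S)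
          (0\<^sub>m m n * T + 1\<^sub>m m * R) (0\<^sub>m m n * 0\<^sub>m n m + 1\<^sub>m m * S)"
    using K T R S by (intro mult_four_block_mat) auto
  also have "\<dots> = four_block_mat P Q R S"
    using K T P Q R S unfolding KS T_def by (intro cong_four_block_mat eq_matI) auto
  finally have factor: "four_block_mat P Q R S
      = four_block_mat (1\<^sub>m n) K (0\<^sub>m m n) (1\<^sub>m m) * four_block_mat T (0\<^sub>m n m) R S" ..
  have "det (four_block_mat P Q R S)
      = det (four_block_mat (1\<^sub>m n) K (0\<^sub>m m n) (1\<^sub>m m)) * det (four_block_mat T (0\<^sub>m n m) R S)"
    unfolding factor using K T R S by (intro det_mult[of _ "n+m"]) auto
  also have "\<dots> = det T * det S"
    by (simp add: det_four_block_mat_lower_left_zero[OF one_carrier_mat K refl one_carrier_mat]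
        det_four_block_mat_upper_right_zero[OF T refl R S])
  finally show ?thesis unfolding T_def K_def .
qed

text \<open>The matrix determinant lemma, from the two Schur complements of
  \<open>[[S, u], [v, 1]]\<close>.\<close>

lemma det_minus_rank_one:
  fixes S :: "'a::field mat"
  assumes S: "S \<in> carrier_mat m m" and Si: "Si \<in> carrier_mat m m" and inv: "S * Si = 1\<^sub>m m"
    and u: "u \<in> carrier_mat m 1" and v: "v \<in> carrier_mat 1 m"
  shows "det (S - u * v) = det S * (1 - (v * Si * u) $$ (0,0))"
proof -
  let ?M = "four_block_mat S u v (1\<^sub>m 1)"
  have "det ?M = det S * det (1\<^sub>m 1 - v * Si * u)"
    using mat_mult_left_right_inverse[OF S Si inv]
    by (intro det_four_block_mat_schur_upper_left[OF S u v one_carrier_mat Si])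
  also have "det (1\<^sub>m 1 - v * Si * u) = 1 - (v * Si * u) $$ (0,0)"
    using v Si u by (subst det_single) auto
  finally have "det ?M = det S * (1 - (v * Si * u) $$ (0,0))" .
  moreover have "det ?M = det (S - u * 1\<^sub>m 1 * v) * det (1\<^sub>m 1 :: 'a mat)"
    by (rule det_four_block_mat_schur_lower_right[OF S u v one_carrier_mat one_carrier_mat]) simp
  ultimately show ?thesis using u by simp
qed

definition ones_mat :: "nat \<Rightarrow> nat \<Rightarrow> 'a::one mat" where
  "ones_mat a b = mat a b (\<lambda>_. 1)"

definition sum_entries :: "'a::comm_monoid_add mat \<Rightarrow> 'a" where
  "sum_entries B = (\<Sum>i<dim_row B. \<Sum>j<dim_col B. B $$ (i,j))"

lemma ones_mat_carrier[simp]: "ones_mat a b \<in> carrier_mat a b"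
  unfolding ones_mat_def by auto

lemma dim_ones_mat[simp]: "dim_row (ones_mat a b) = a" "dim_col (ones_mat a b) = b"
  unfolding ones_mat_def by auto

lemma index_ones_mat[simp]: "i < a \<Longrightarrow> j < b \<Longrightarrow> ones_mat a b $$ (i,j) = 1"
  unfolding ones_mat_def by auto

lemma smult_ones_mat_mult_smult_ones_mat:
  fixes B :: "'a::comm_ring_1 mat"
  assumes B: "B \<in> carrier_mat n n"
  shows "(k \<cdot>\<^sub>m ones_mat a n) * B * (l \<cdot>\<^sub>m ones_mat n b) = (k * l * sum_entries B) \<cdot>\<^sub>m ones_mat a b"
proof (rule eq_matI)
  fix i j assume "i < dim_row ((k * l * sum_entries B) \<cdot>\<^sub>m ones_mat a b)"
    and "j < dim_col ((k * l * sum_entries B) \<cdot>\<^sub>m ones_mat a b)"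
  hence i: "i < a" and j: "j < b" by auto
  have "((k \<cdot>\<^sub>m ones_mat a n) * B * (l \<cdot>\<^sub>m ones_mat n b)) $$ (i,j) = (\<Sum>q<n. (\<Sum>p<n. k * B $$ (p,q)) * l)"
    using i j B by (simp add: scalar_prod_def lessThan_atLeast0)
  also have "\<dots> = (\<Sum>p<n. \<Sum>q<n. k * l * B $$ (p,q))"
    by (subst sum.swap) (simp add: sum_distrib_left sum_distrib_right mult_ac)
  also have "\<dots> = k * l * sum_entries B"
    using B unfolding sum_entries_def by (simp add: sum_distrib_left)
  finally show "((k \<cdot>\<^sub>m ones_mat a n) * B * (l \<cdot>\<^sub>m ones_mat n b)) $$ (i,j)
      = ((k * l * sum_entries B) \<cdot>\<^sub>m ones_mat a b) $$ (i,j)"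
    using i j by simp
qed auto

lemma det_minus_smult_ones_mat:
  fixes S :: "'a::field mat"
  assumes S: "S \<in> carrier_mat m m" and Si: "Si \<in> carrier_mat m m" and inv: "S * Si = 1\<^sub>m m"
  shows "det (S - k \<cdot>\<^sub>m ones_mat m m) = det S * (1 - k * sum_entries Si)"
proof -
  have "(k \<cdot>\<^sub>m ones_mat m 1) * 1\<^sub>m 1 * (1 \<cdot>\<^sub>m ones_mat 1 m) = k \<cdot>\<^sub>m ones_mat m m"
    by (subst smult_ones_mat_mult_smult_ones_mat) (simp_all add: sum_entries_def)
  moreover have "(1 \<cdot>\<^sub>m ones_mat 1 m) * Si * (k \<cdot>\<^sub>m ones_mat m 1) = (k * sum_entries Si) \<cdot>\<^sub>m ones_mat 1 1"
    using smult_ones_mat_mult_smult_ones_mat[OF Si] by simp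
  ultimately show ?thesis
    using det_minus_rank_one[OF S Si inv, of "k \<cdot>\<^sub>m ones_mat m 1" "1 \<cdot>\<^sub>m ones_mat 1 m"] by simp
qed

lemma poly_eqI_cofinite:
  fixes p q :: "'a::{idom, ring_char_0} poly"
  assumes "finite F" and agree: "\<And>x. x \<notin> F \<Longrightarrow> poly p x = poly q x"
  shows "p = q"
proof (rule ccontr)
  assume "p \<noteq> q"
  hence "finite (F \<union> {x. poly (p - q) x = 0})"
    using \<open>finite F\<close> poly_roots_finite[of "p - q"] by simp
  then obtain x where "x \<notin> F \<union> {x. poly (p - q) x = 0}"
    using ex_new_if_finite[OF infinite_UNIV_char_0] by blast
  thus False using agree[of x] by simp
qed

lemma poly_char_poly_eq_det:
  assumes A: "(A :: 'a::field mat) \<in> carrier_mat n n"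
  shows "poly (char_poly A) x = det (x \<cdot>\<^sub>m 1\<^sub>m n - A)"
proof -
  have "- char_matrix A x = x \<cdot>\<^sub>m 1\<^sub>m n - A"
    using A by (intro eq_matI) (auto simp: char_matrix_def)
  thus ?thesis using char_poly_matrix[OF A, of x] by simp
qed

lemma eigenvalues_eq_iff_char_poly_eq:
  assumes A: "A \<in> carrier_mat n n" and B: "B \<in> carrier_mat m m"
  shows "eigenvalues A = eigenvalues B \<longleftrightarrow> char_poly A = char_poly B"
proof
  define cp where "cp M = char_poly (map_mat complex_of_real M)" for M
  have cp_hom: "cp M = map_poly complex_of_real (char_poly M)" if "M \<in> carrier_mat k k" for M k
    unfolding cp_def by (rule of_real_hom.char_poly_hom[OF that])
  have cp_factors: "cp M = (\<Prod>x\<in>#proots (cp M). [:-x, 1:])" if "M \<in> carrier_mat k k" for M k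
  proof -
    have "lead_coeff (cp M) = 1"
      using degree_monic_char_poly[of "map_mat complex_of_real M" k] that unfolding cp_def by simp
    thus ?thesis using complex_poly_decompose_multiset[of "cp M"] by simp
  qed
  assume "eigenvalues A = eigenvalues B"
  hence "cp A = cp B"
    using cp_factors[OF A] cp_factors[OF B] unfolding eigenvalues_def cp_def by simp
  thus "char_poly A = char_poly B"
    unfolding cp_hom[OF A] cp_hom[OF B]
    by (intro poly_eqI) (metis coeff_map_poly of_real_0 of_real_eq_iff)
qed (simp add: eigenvalues_def of_real_hom.char_poly_hom[OF A] of_real_hom.char_poly_hom[OF B])

lemma coronal_eq_sum_entries:
  assumes M: "M \<in> carrier_mat n n" and inv: "mat_inverse (y \<cdot>\<^sub>m 1\<^sub>m n - M) = Some B"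
    and B: "B \<in> carrier_mat n n"
  shows "coronal M y = sum_entries B"
proof -
  have "dim_row M = n" using M by simp
  thus ?thesis unfolding coronal_def using inv B
    by (simp add: scalar_prod_def sum_entries_def mult_mat_vec_def lessThan_atLeast0)
qed

lemma mat_inverse_if_det_nonzero:
  fixes P :: "'a::field mat"
  assumes P: "P \<in> carrier_mat n n" and det: "det P \<noteq> 0"
  obtains B where "mat_inverse P = Some B" "P * B = 1\<^sub>m n" "B * P = 1\<^sub>m n" "B \<in> carrier_mat n n"
proof (cases "mat_inverse P")
  case None
  with mat_inverse(1)[OF P, where b="()"] det_non_zero_imp_unit[OF P det, where b="()"] show ?thesis by blast
next
  case (Some B)
  with mat_inverse(2)[OF P] that show ?thesis by blast
qed

lemma finite_eigenvalues:
  assumes A: "(A :: 'a::{field, ring_char_0} mat) \<in> carrier_mat n n"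
  shows "finite {x. eigenvalue A x}"
proof -
  have "char_poly A \<noteq> 0" using degree_monic_char_poly[OF A] by auto
  thus ?thesis unfolding eigenvalue_root_char_poly[OF A] by (rule poly_roots_finite)
qed

lemma A_alpha_carrier[simp]: "A_alpha a G \<in> carrier_mat (nverts G) (nverts G)"
  unfolding A_alpha_def deg_matrix_def adj_matrix_def by auto

lemma nverts_join: "nverts (join G H) = nverts G + nverts H"
  unfolding join_def nverts_def by simp

lemma adj_join: "adj (join G H) i j =
    (if i < nverts G \<and> j < nverts G then adj G i j
     else if nverts G \<le> i \<and> nverts G \<le> j then adj H (i - nverts G) (j - nverts G)
     else True)"
  unfolding join_def nverts_def adj_def by simp

lemma degree_join_left:
  assumes i: "i < nverts G"
  shows "degree (join G H) i = degree G i + nverts H"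
proof -
  let ?n = "nverts G" and ?m = "nverts H"
  have "{j. j < nverts (join G H) \<and> adj (join G H) i j} = {j. j < ?n \<and> adj G i j} \<union> {?n..<?n+?m}"
    using i unfolding nverts_join adj_join by auto
  moreover have "card ({j. j < ?n \<and> adj G i j} \<union> {?n..<?n+?m}) = card {j. j < ?n \<and> adj G i j} + ?m"
    by (subst card_Un_disjoint) auto
  ultimately show ?thesis unfolding degree_def by simp
qed

lemma degree_join_right:
  assumes i: "nverts G \<le> i" "i < nverts G + nverts H"
  shows "degree (join G H) i = degree H (i - nverts G) + nverts G"
proof -
  let ?n = "nverts G" and ?m = "nverts H"
  have "{j. j < nverts (join G H) \<and> adj (join G H) i j}
      = {..<?n} \<union> (\<lambda>j. j + ?n) ` {j. j < ?m \<and> adj H (i - ?n) j}"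
    using i unfolding nverts_join adj_join
    by (auto simp: image_iff) (metis add_diff_inverse_nat add.commute less_diff_conv2 not_less)
  moreover have "card ({..<?n} \<union> (\<lambda>j. j + ?n) ` {j. j < ?m \<and> adj H (i - ?n) j})
      = ?n + card {j. j < ?m \<and> adj H (i - ?n) j}"
    by (subst card_Un_disjoint) (auto simp: card_image inj_on_def)
  ultimately show ?thesis unfolding degree_def by simp
qed

text \<open>Each vertex of \<open>G\<close> gains the \<open>m\<close> vertices of \<open>H\<close> as neighbours, which shifts the
  diagonal of the \<open>G\<close>-block by \<open>\<alpha>m\<close>, and vice versa.\<close>

lemma char_matrix_A_alpha_join:
  fixes a x :: real and G H :: graph
  defines "n \<equiv> nverts G" and "m \<equiv> nverts H"
  shows "x \<cdot>\<^sub>m 1\<^sub>m (n+m) - A_alpha a (join G H) =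
    four_block_mat ((x - a * m) \<cdot>\<^sub>m 1\<^sub>m n - A_alpha a G) ((-(1-a)) \<cdot>\<^sub>m ones_mat n m)
      ((-(1-a)) \<cdot>\<^sub>m ones_mat m n) ((x - a * n) \<cdot>\<^sub>m 1\<^sub>m m - A_alpha a H)"
    (is "?L = ?R")
proof (rule eq_matI)
  have dims: "?L \<in> carrier_mat (n+m) (n+m)" "?R \<in> carrier_mat (n+m) (n+m)"
    using A_alpha_carrier[of a "join G H"] A_alpha_carrier[of a G] A_alpha_carrier[of a H]
    unfolding n_def m_def nverts_join by (auto intro!: four_block_carrier_mat minus_carrier_mat)
  show "dim_row ?L = dim_row ?R" "dim_col ?L = dim_col ?R"
    by (simp_all only: carrier_matD[OF dims(1)] carrier_matD[OF dims(2)])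
  fix i j assume "i < dim_row ?R" "j < dim_col ?R"
  hence i: "i < n + m" and j: "j < n + m"
    by (simp_all only: carrier_matD[OF dims(2)])
  have nj: "nverts (join G H) = n + m" unfolding n_def m_def nverts_join ..
  show "?L $$ (i,j) = ?R $$ (i,j)"
  proof (cases "i < n")
    case True
    then show ?thesis using i j degree_join_left[of i G H]
      unfolding A_alpha_def deg_matrix_def adj_matrix_def nj
      by (auto simp: adj_join n_def m_def algebra_simps)
  next
    case False
    then show ?thesis using i j degree_join_right[of G i H]
      unfolding A_alpha_def deg_matrix_def adj_matrix_def nj
      by (auto simp: adj_join n_def m_def algebra_simps)
  qed
qed

lemma poly_char_poly_A_alpha_join:
  fixes a x :: real and G H :: graph
  defines "n \<equiv> nverts G" and "m \<equiv> nverts H"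
  assumes G: "\<not> eigenvalue (A_alpha a G) (x - a * m)"
    and H: "\<not> eigenvalue (A_alpha a H) (x - a * n)"
  shows "poly (char_poly (A_alpha a (join G H))) x =
    poly (char_poly (A_alpha a G)) (x - a * m) * poly (char_poly (A_alpha a H)) (x - a * n)
    * (1 - (1-a)^2 * coronal (A_alpha a G) (x - a * m) * coronal (A_alpha a H) (x - a * n))"
proof -
  define P where "P = (x - a * m) \<cdot>\<^sub>m 1\<^sub>m n - A_alpha a G"
  define S where "S = (x - a * n) \<cdot>\<^sub>m 1\<^sub>m m - A_alpha a H"
  have AG: "A_alpha a G \<in> carrier_mat n n" and AH: "A_alpha a H \<in> carrier_mat m m"
    unfolding n_def m_def by simp_all
  have P: "P \<in> carrier_mat n n" and S: "S \<in> carrier_mat m m"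
    unfolding P_def S_def using AG AH by auto
  have detP: "det P = poly (char_poly (A_alpha a G)) (x - a * m)"
    unfolding P_def by (rule poly_char_poly_eq_det[OF AG, symmetric])
  have detS: "det S = poly (char_poly (A_alpha a H)) (x - a * n)"
    unfolding S_def by (rule poly_char_poly_eq_det[OF AH, symmetric])
  obtain Pv where Pv: "mat_inverse P = Some Pv" "Pv * P = 1\<^sub>m n" "Pv \<in> carrier_mat n n"
    using mat_inverse_if_det_nonzero[OF P] G eigenvalue_root_char_poly[OF AG] detP by metis
  obtain Si where Si: "mat_inverse S = Some Si" "S * Si = 1\<^sub>m m" "Si \<in> carrier_mat m m"
    using mat_inverse_if_det_nonzero[OF S] H eigenvalue_root_char_poly[OF AH] detS by metis
  have cG: "coronal (A_alpha a G) (x - a * m) = sum_entries Pv"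
    using coronal_eq_sum_entries[OF AG _ Pv(3)] Pv(1) unfolding P_def by blast
  have cH: "coronal (A_alpha a H) (x - a * n) = sum_entries Si"
    using coronal_eq_sum_entries[OF AH _ Si(3)] Si(1) unfolding S_def by blast
  let ?Q = "(-(1-a)) \<cdot>\<^sub>m ones_mat n m" and ?R = "(-(1-a)) \<cdot>\<^sub>m ones_mat m n"
  have "poly (char_poly (A_alpha a (join G H))) x = det (four_block_mat P ?Q ?R S)"
    using poly_char_poly_eq_det[OF A_alpha_carrier, of a "join G H" x]
    unfolding P_def S_def n_def m_def nverts_join char_matrix_A_alpha_join by simp
  also have "\<dots> = det P * det (S - ?R * Pv * ?Q)"
    by (rule det_four_block_mat_schur_upper_left[OF P _ _ S Pv(3) Pv(2)]) simp_all
  also have "?R * Pv * ?Q = ((1-a)^2 * sum_entries Pv) \<cdot>\<^sub>m ones_mat m m"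
    by (simp add: smult_ones_mat_mult_smult_ones_mat[OF Pv(3)] power2_eq_square algebra_simps)
  also have "det (S - ((1-a)^2 * sum_entries Pv) \<cdot>\<^sub>m ones_mat m m)
      = det S * (1 - (1-a)^2 * sum_entries Pv * sum_entries Si)"
    by (rule det_minus_smult_ones_mat[OF S Si(3) Si(2)])
  finally show ?thesis unfolding detP detS cG cH by (simp add: mult_ac)
qed

lemma A_alpha_cospectral_iff_char_poly_eq:
  "A_alpha_cospectral a G H \<longleftrightarrow> char_poly (A_alpha a G) = char_poly (A_alpha a H)"
  unfolding A_alpha_cospectral_def
  by (rule eigenvalues_eq_iff_char_poly_eq[OF A_alpha_carrier A_alpha_carrier])

lemma nverts_eq_if_char_poly_A_alpha_eq:
  assumes "char_poly (A_alpha a G) = char_poly (A_alpha a H)"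
  shows "nverts G = nverts H"
  using assms degree_monic_char_poly[OF A_alpha_carrier[of a G]]
    degree_monic_char_poly[OF A_alpha_carrier[of a H]] by simp

lemma A_alpha_cospectral_join:
  assumes G: "A_alpha_cospectral a G1 G2" "same_coronal (A_alpha a G1) (A_alpha a G2)"
    and H: "A_alpha_cospectral a H1 H2" "same_coronal (A_alpha a H1) (A_alpha a H2)"
  shows "A_alpha_cospectral a (join G1 H1) (join G2 H2)"
proof -
  define n where "n = nverts G1"
  define m where "m = nverts H1"
  have pG: "char_poly (A_alpha a G1) = char_poly (A_alpha a G2)"
    and pH: "char_poly (A_alpha a H1) = char_poly (A_alpha a H2)"
    using G(1) H(1) unfolding A_alpha_cospectral_iff_char_poly_eq by simp_all
  have n2: "nverts G2 = n" and m2: "nverts H2 = m"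
    using nverts_eq_if_char_poly_A_alpha_eq[OF pG] nverts_eq_if_char_poly_A_alpha_eq[OF pH]
    unfolding n_def m_def by simp_all
  have eig_G2: "eigenvalue (A_alpha a G2) y \<longleftrightarrow> eigenvalue (A_alpha a G1) y" for y
    using pG by (simp add: eigenvalue_root_char_poly[OF A_alpha_carrier])
  have eig_H2: "eigenvalue (A_alpha a H2) y \<longleftrightarrow> eigenvalue (A_alpha a H1) y" for y
    using pH by (simp add: eigenvalue_root_char_poly[OF A_alpha_carrier])
  define F where "F = (\<lambda>y. y + a * m) ` {y. eigenvalue (A_alpha a G1) y}
    \<union> (\<lambda>y. y + a * n) ` {y. eigenvalue (A_alpha a H1) y}"
  have "finite F"
    unfolding F_def using finite_eigenvalues[OF A_alpha_carrier] by blast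
  show ?thesis unfolding A_alpha_cospectral_iff_char_poly_eq
  proof (rule poly_eqI_cofinite[OF \<open>finite F\<close>])
    fix x assume "x \<notin> F"
    hence not_eig: "\<not> eigenvalue (A_alpha a G1) (x - a * m)" "\<not> eigenvalue (A_alpha a H1) (x - a * n)"
      unfolding F_def by force+
    have "coronal (A_alpha a G1) (x - a * m) = coronal (A_alpha a G2) (x - a * m)"
      and "coronal (A_alpha a H1) (x - a * n) = coronal (A_alpha a H2) (x - a * n)"
      using G(2) H(2) not_eig eig_G2 eig_H2 unfolding same_coronal_def by simp_all
    thus "poly (char_poly (A_alpha a (join G1 H1))) x = poly (char_poly (A_alpha a (join G2 H2))) x"
      using poly_char_poly_A_alpha_join[of a G1 x H1] poly_char_poly_A_alpha_join[of a G2 x H2]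
        not_eig eig_G2 eig_H2 pG pH
      unfolding n_def m_def n2 m2 by simp
  qed
qed

theorem corollary3p2:
  fixes \<alpha> :: real
  assumes "0 \<le> \<alpha>" and "\<alpha> \<le> 1"
  shows "(\<forall>G H1 H2. simple_graph G \<and> simple_graph H1 \<and> simple_graph H2 \<and>
            A_alpha_cospectral \<alpha> H1 H2 \<and> same_coronal (A_alpha \<alpha> H1) (A_alpha \<alpha> H2)
            \<longrightarrow> A_alpha_cospectral \<alpha> (join G H1) (join G H2))
       \<and> (\<forall>G1 G2 H1 H2. simple_graph G1 \<and> simple_graph G2 \<and> simple_graph H1 \<and> simple_graph H2 \<and>
            A_alpha_cospectral \<alpha> G1 G2 \<and> same_coronal (A_alpha \<alpha> G1) (A_alpha \<alpha> G2) \<and>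
            A_alpha_cospectral \<alpha> H1 H2 \<and> same_coronal (A_alpha \<alpha> H1) (A_alpha \<alpha> H2)
            \<longrightarrow> A_alpha_cospectral \<alpha> (join G1 H1) (join G2 H2))"
proof (intro conjI allI impI)
  fix G H1 H2
  assume "simple_graph G \<and> simple_graph H1 \<and> simple_graph H2 \<and>
    A_alpha_cospectral \<alpha> H1 H2 \<and> same_coronal (A_alpha \<alpha> H1) (A_alpha \<alpha> H2)"
  moreover have "A_alpha_cospectral \<alpha> G G" "same_coronal (A_alpha \<alpha> G) (A_alpha \<alpha> G)"
    unfolding A_alpha_cospectral_def same_coronal_def by simp_all
  ultimately show "A_alpha_cospectral \<alpha> (join G H1) (join G H2)"
    using A_alpha_cospectral_join by blast
next
  fix G1 G2 H1 H2
  assume "simple_graph G1 \<and> simple_graph G2 \<and> simple_graph H1 \<and> simple_graph H2 \<and>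
    A_alpha_cospectral \<alpha> G1 G2 \<and> same_coronal (A_alpha \<alpha> G1) (A_alpha \<alpha> G2) \<and>
    A_alpha_cospectral \<alpha> H1 H2 \<and> same_coronal (A_alpha \<alpha> H1) (A_alpha \<alpha> H2)"
  thus "A_alpha_cospectral \<alpha> (join G1 H1) (join G2 H2)"
    using A_alpha_cospectral_join by blast
qed

end
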